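(* Let $\omega$ be a primitive third root of unity, $S=\mathbb{C}\langle x,y,z\rangle/(x^2,y^2,z^2)$ graded by $\deg x=\deg y=\deg z=1$. For $p=([A_1:B_1],[A_2:B_2])\in\mathbb{P}^1\times\mathbb{P}^1$ let $I_p$ be the two-sided ideal of $S$ generated by $$A_1(zxy+\omega xyz+\omega^2 yzx)+B_1(yxz+\omega zyx+\omega^2 xzy),\quad A_2(zxy+\omega^2 xyz+\omega yzx)+B_2(yxz+\omega^2 zyx+\omega xzy).$$ Then $\dim (S/I_p)_k=\dim\mathbb{C}[x,y,z]_k=\binom{k+2}{2}$ for all $k\le 4$ if and only if $A_1B_2-A_2B_1=0$. *)

theory Defs
  imports Complex_Main "HOL-Library.Function_Algebras"
begin

text \<open>Noncommutative polynomials in the letters x = 0, y = 1, z = 2 are represented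
  as coefficient functions on words (nat lists).\<close>

type_synonym ncpoly = "nat list \<Rightarrow> complex"

definition ncsc :: "complex \<Rightarrow> ncpoly \<Rightarrow> ncpoly" where
  "ncsc c f = (\<lambda>w. c * f w)"

definition ncmul :: "ncpoly \<Rightarrow> ncpoly \<Rightarrow> ncpoly" where
  "ncmul f g = (\<lambda>w. \<Sum>i\<le>length w. f (take i w) * g (drop i w))"

definition mon :: "nat list \<Rightarrow> ncpoly" where
  "mon u = (\<lambda>w. if w = u then 1 else 0)"

definition FA :: "ncpoly set" where
  "FA = {f. finite {w. f w \<noteq> 0} \<and> (\<forall>w. f w \<noteq> 0 \<longrightarrow> set w \<subseteq> {0,1,2})}"

definition hom :: "nat \<Rightarrow> ncpoly set" where
  "hom k = {f \<in> FA. \<forall>w. f w \<noteq> 0 \<longrightarrow> length w = k}"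

definition ncspan :: "ncpoly set \<Rightarrow> ncpoly set" where
  "ncspan = Modules.module.span ncsc"

definition ncdim :: "ncpoly set \<Rightarrow> nat" where
  "ncdim = Vector_Spaces.vector_space.dim ncsc"

definition ideal_gen :: "ncpoly set \<Rightarrow> ncpoly set" where
  "ideal_gen G = ncspan {ncmul (ncmul a g) b | a g b. a \<in> FA \<and> g \<in> G \<and> b \<in> FA}"

definition quot_dim :: "ncpoly set \<Rightarrow> nat \<Rightarrow> nat" where
  "quot_dim G k = ncdim (hom k) - ncdim (ideal_gen G \<inter> hom k)"

text \<open>The generators of I_p (together with x^2, y^2, z^2, which define S).\<close>
definition gen1 :: "complex \<Rightarrow> complex \<Rightarrow> complex \<Rightarrow> ncpoly" where
  "gen1 \<omega> A B =
     ncsc A (mon [2,0,1] + ncsc \<omega> (mon [0,1,2]) + ncsc (\<omega>^2) (mon [1,2,0]))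
   + ncsc B (mon [1,0,2] + ncsc \<omega> (mon [2,1,0]) + ncsc (\<omega>^2) (mon [0,2,1]))"

definition gen2 :: "complex \<Rightarrow> complex \<Rightarrow> complex \<Rightarrow> ncpoly" where
  "gen2 \<omega> A B =
     ncsc A (mon [2,0,1] + ncsc (\<omega>^2) (mon [0,1,2]) + ncsc \<omega> (mon [1,2,0]))
   + ncsc B (mon [1,0,2] + ncsc (\<omega>^2) (mon [2,1,0]) + ncsc \<omega> (mon [0,2,1]))"

definition Sp_rels :: "complex \<Rightarrow> complex \<Rightarrow> complex \<Rightarrow> complex \<Rightarrow> complex \<Rightarrow> ncpoly set" where
  "Sp_rels \<omega> A1 B1 A2 B2 =
     {mon [0,0], mon [1,1], mon [2,2], gen1 \<omega> A1 B1, gen2 \<omega> A2 B2}"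

end

theory Submission
  imports Defs
begin

text \<open>All relations are homogeneous, so the degree \<open>k\<close> part of the ideal is spanned by the
  products \<open>u g v\<close> of degree \<open>k\<close> with \<open>g\<close> a relation and \<open>u, v\<close> words.  The relations \<open>x\<^sup>2, y\<^sup>2, z\<^sup>2\<close>
  contribute exactly the monomials containing a square \<open>aa\<close>; modulo these only the \<open>1, 3, 6, 12, 24\<close>
  square-free words of length \<open>k \<le> 4\<close> remain, against the target \<open>1, 3, 6, 10, 15\<close>.  In degree 3
  the two cubic relations are independent modulo squares.  In degree 4 the twelve products \<open>a g\<^sub>i\<close>,
  \<open>g\<^sub>i a\<close> (\<open>a\<close> a letter) must therefore have rank exactly 9 modulo squares.  Evaluating them on
  square-free words shows that they are independent when \<open>A\<^sub>1 B\<^sub>2 \<noteq> A\<^sub>2 B\<^sub>1\<close>, whereas for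
  \<open>(A\<^sub>2, B\<^sub>2) = c (A\<^sub>1, B\<^sub>1)\<close> the three congruences \<open>a g\<^sub>2 + g\<^sub>2 a \<equiv> c \<omega>\<^sup>a (a g\<^sub>1 + g\<^sub>1 a)\<close> leave
  exactly nine independent products.\<close>

section \<open>Noncommutative polynomials as a vector space\<close>

interpretation V: vector_space ncsc
  by unfold_locales (auto simp: ncsc_def fun_eq_iff algebra_simps)

lemma ncspan_eq: "ncspan = V.span"
  by (simp add: ncspan_def)

lemma ncdim_eq: "ncdim = V.dim"
  by (simp add: ncdim_def)

lemma ncsc_apply [simp]: "ncsc c f w = c * f w"
  by (simp add: ncsc_def)

lemma sum_apply: "(sum f A) x = (\<Sum>i\<in>A. f i x)"
  by (induction A rule: infinite_finite_induct) auto

lemma ncmul_mon_left: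
  "ncmul (mon u) f = (\<lambda>w. if take (length u) w = u then f (drop (length u) w) else 0)"
proof
  fix w
  have "ncmul (mon u) f w
      = (\<Sum>i\<le>length w. if i = length u then
           (if take (length u) w = u then f (drop (length u) w) else 0) else 0)"
    unfolding ncmul_def by (rule sum.cong) (auto simp: mon_def)
  also have "\<dots> = (if take (length u) w = u then f (drop (length u) w) else 0)"
    by (auto simp: min_def dest: arg_cong[of _ _ length])
  finally show "ncmul (mon u) f w = \<dots>" .
qed

lemma ncmul_mon_right:
  "ncmul f (mon v) = (\<lambda>w. if length v \<le> length w \<and> drop (length w - length v) w = v
                          then f (take (length w - length v) w) else 0)"
proof
  fix w :: "nat list"
  let ?n = "length w - length v"
  let ?c = "length v \<le> length w \<and> drop ?n w = v"
  have "ncmul f (mon v) w = (\<Sum>i\<le>length w. if i = ?n then (if ?c then f (take ?n w) else 0) else 0)"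
    unfolding ncmul_def
  proof (rule sum.cong [OF refl])
    fix i assume "i \<in> {..length w}"
    then have "drop i w = v \<longleftrightarrow> i = ?n \<and> ?c"
      by (metis atMost_iff diff_diff_cancel diff_le_self length_drop)
    then show "f (take i w) * mon v (drop i w) = (if i = ?n then (if ?c then f (take ?n w) else 0) else 0)"
      by (auto simp: mon_def)
  qed
  also have "\<dots> = (if ?c then f (take ?n w) else 0)"
    by (subst sum.delta) auto
  finally show "ncmul f (mon v) w = (if ?c then f (take ?n w) else 0)" .
qed

lemma ncmul_mon_mon: "ncmul (mon u) (mon v) = mon (u @ v)"
  unfolding ncmul_mon_left
  by (auto simp: mon_def fun_eq_iff dest: arg_cong[of _ _ length]) (metis append_take_drop_id)

lemma ncmul_sum_left:
  "ncmul (\<Sum>i\<in>A. ncsc (c i) (F i)) h = (\<Sum>i\<in>A. ncsc (c i) (ncmul (F i) h))"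
  by (simp add: ncmul_def sum_apply sum_distrib_left sum_distrib_right mult.assoc fun_eq_iff
      flip: sum.swap[where A = A])

lemma ncmul_sum_right:
  "ncmul h (\<Sum>i\<in>A. ncsc (c i) (F i)) = (\<Sum>i\<in>A. ncsc (c i) (ncmul h (F i)))"
  by (simp add: ncmul_def sum_apply sum_distrib_left mult.left_commute fun_eq_iff
      flip: sum.swap[where A = A])

definition sandwich :: "nat list \<Rightarrow> ncpoly \<Rightarrow> nat list \<Rightarrow> ncpoly" where
  "sandwich u g v = ncmul (ncmul (mon u) g) (mon v)"

lemma sandwich_append [simp]: "sandwich u g v (u @ w @ v) = g w"
  by (simp add: sandwich_def ncmul_mon_left ncmul_mon_right)

lemma sandwich_nonzero: "sandwich u g v w \<noteq> 0 \<Longrightarrow> \<exists>w'. w = u @ w' @ v \<and> g w' \<noteq> 0"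
proof -
  assume nz: "sandwich u g v w \<noteq> 0"
  let ?n = "length w - length v"
  from nz have v: "length v \<le> length w \<and> drop ?n w = v" and u: "take (length u) (take ?n w) = u"
    unfolding sandwich_def ncmul_mon_left ncmul_mon_right by (auto split: if_splits)
  have "w = take ?n w @ drop ?n w"
    by simp
  also have "take ?n w = u @ drop (length u) (take ?n w)"
    using u by (metis append_take_drop_id)
  finally have "w = u @ drop (length u) (take ?n w) @ v"
    using v by simp
  with nz show ?thesis
    by (metis sandwich_append)
qed

lemma sandwich_mon: "sandwich u (mon x) v = mon (u @ x @ v)"
  by (simp add: sandwich_def ncmul_mon_mon)

lemma sandwich_Nil_Nil: "sandwich [] g [] = g"
  by (simp add: sandwich_def ncmul_mon_left ncmul_mon_right)

lemma sandwich_letter_left: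
  "sandwich [a] g [] = (\<lambda>w. case w of [] \<Rightarrow> 0 | b # w' \<Rightarrow> if b = a then g w' else 0)"
  by (auto simp: sandwich_def ncmul_mon_left ncmul_mon_right fun_eq_iff split: list.split)

lemma sandwich_letter_right:
  "sandwich [] g [a] = (\<lambda>w. if w \<noteq> [] \<and> last w = a then g (butlast w) else 0)"
proof
  fix w
  show "sandwich [] g [a] w = (if w \<noteq> [] \<and> last w = a then g (butlast w) else 0)"
    by (cases w rule: rev_cases) (auto simp: sandwich_def ncmul_mon_left ncmul_mon_right)
qed

section \<open>Homogeneous components\<close>

definition words :: "nat \<Rightarrow> nat list set" where
  "words k = {w. set w \<subseteq> {0,1,2} \<and> length w = k}"

lemma finite_words [simp]: "finite (words k)"
  unfolding words_def by (rule finite_lists_length_eq) simp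

lemma card_words: "card (words k) = 3 ^ k"
  unfolding words_def by (simp add: card_lists_length_eq numeral_3_eq_3)

definition supp :: "ncpoly \<Rightarrow> nat list set" where
  "supp f = {w. f w \<noteq> 0}"

lemma expansion_in_mon:
  assumes "finite A" "supp f \<subseteq> A"
  shows "f = (\<Sum>u\<in>A. ncsc (f u) (mon u))"
proof
  fix w
  have "(\<Sum>u\<in>A. ncsc (f u) (mon u)) w = (\<Sum>u\<in>A. if u = w then f w else 0)"
    unfolding sum_apply by (rule sum.cong) (auto simp: mon_def)
  also have "\<dots> = f w"
    using assms by (subst sum.delta) (auto simp: supp_def)
  finally show "f w = (\<Sum>u\<in>A. ncsc (f u) (mon u)) w" by simp
qed

lemma in_span_mon_if_supp_subset:
  assumes "finite A" "supp f \<subseteq> A"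
  shows "f \<in> V.span (mon ` A)"
proof -
  have "(\<Sum>u\<in>A. ncsc (f u) (mon u)) \<in> V.span (mon ` A)"
    by (intro V.span_sum V.span_scale V.span_base) auto
  with expansion_in_mon[OF assms] show ?thesis by simp
qed

lemma mon_sum_eq_0_imp_coeff_eq_0:
  assumes "finite A" "(\<Sum>u\<in>A. ncsc (c u) (mon u)) = 0" "u \<in> A"
  shows "c u = 0"
proof -
  have "(\<Sum>u'\<in>A. ncsc (c u') (mon u')) u = (\<Sum>u'\<in>A. if u' = u then c u' else 0)"
    unfolding sum_apply by (rule sum.cong) (auto simp: mon_def)
  also have "\<dots> = c u"
    using assms by (subst sum.delta) auto
  finally show ?thesis
    using assms by simp
qed

lemma independent_image_if_scalars_zero:
  assumes fin: "finite I" and zero: "\<And>c. (\<Sum>i\<in>I. ncsc (c i) (F i)) = 0 \<Longrightarrow> \<forall>i\<in>I. c i = 0"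
  shows "V.independent (F ` I) \<and> card (F ` I) = card I"
proof -
  have inj: "inj_on F I"
  proof (rule inj_onI, rule ccontr)
    fix i j assume ij: "i \<in> I" "j \<in> I" "F i = F j" "i \<noteq> j"
    define c where "c k = (if k = i then 1 else if k = j then -1 else 0 :: complex)" for k
    have "(\<Sum>k\<in>I. ncsc (c k) (F k)) = (\<Sum>k\<in>{i, j}. ncsc (c k) (F k))"
      using fin ij(1,2) by (intro sum.mono_neutral_right) (auto simp: c_def)
    also have "\<dots> = 0"
      using ij by (simp add: c_def fun_eq_iff)
    finally have "c i = 0"
      using zero ij(1) by blast
    then show False
      by (simp add: c_def)
  qed
  have "V.independent (F ` I)"
  proof (rule V.independent_if_scalars_zero)
    show "finite (F ` I)"
      using fin by simp
    fix f x assume sum0: "(\<Sum>x\<in>F ` I. ncsc (f x) x) = 0" and x: "x \<in> F ` I"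
    have "(\<Sum>i\<in>I. ncsc (f (F i)) (F i)) = 0"
      using sum0 by (simp add: sum.reindex[OF inj])
    then have "\<forall>i\<in>I. f (F i) = 0"
      by (rule zero)
    with x show "f x = 0"
      by blast
  qed
  with inj show ?thesis
    by (simp add: card_image)
qed

lemma independent_mon: "finite A \<Longrightarrow> V.independent (mon ` A) \<and> card (mon ` A) = card A"
  by (rule independent_image_if_scalars_zero) (auto intro: mon_sum_eq_0_imp_coeff_eq_0)

lemma hom_subspace: "V.subspace (hom k)"
  unfolding V.subspace_def
proof (intro conjI ballI allI)
  show "0 \<in> hom k"
    by (simp add: hom_def FA_def)
  fix f g assume f: "f \<in> hom k" and g: "g \<in> hom k"
  have sub: "{w. (f + g) w \<noteq> 0} \<subseteq> {w. f w \<noteq> 0} \<union> {w. g w \<noteq> 0}"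
    by auto
  with f g show "f + g \<in> hom k"
    unfolding hom_def FA_def by (blast intro: finite_subset[OF sub])
next
  fix c f assume "f \<in> hom k"
  then show "ncsc c f \<in> hom k"
    unfolding hom_def FA_def by (auto intro: finite_subset)
qed

lemma mon_in_hom_iff: "mon u \<in> hom k \<longleftrightarrow> u \<in> words k"
  by (auto simp: hom_def FA_def words_def mon_def)

lemma hom_vanishes: "f \<in> hom k \<Longrightarrow> x \<notin> words k \<Longrightarrow> f x = 0"
  by (auto simp: hom_def FA_def words_def)

lemma hom_eq_0_if_other_degree: "f \<in> hom k \<Longrightarrow> f \<in> hom d \<Longrightarrow> d \<noteq> k \<Longrightarrow> f = 0"
  by (auto simp: hom_def fun_eq_iff)

lemma hom_eq_span_mon: "hom k = V.span (mon ` words k)"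
proof
  show "hom k \<subseteq> V.span (mon ` words k)"
  proof
    fix f assume "f \<in> hom k"
    then have "supp f \<subseteq> words k"
      by (auto simp: hom_def FA_def words_def supp_def)
    then show "f \<in> V.span (mon ` words k)"
      by (simp add: in_span_mon_if_supp_subset)
  qed
  show "V.span (mon ` words k) \<subseteq> hom k"
    using mon_in_hom_iff hom_subspace by (intro V.span_minimal) blast+
qed

lemma ncdim_hom: "ncdim (hom k) = 3 ^ k"
proof -
  have "V.independent (mon ` words k)" "card (mon ` words k) = 3 ^ k"
    using independent_mon[of "words k"] by (simp_all add: card_words)
  then show ?thesis
    by (simp add: ncdim_eq hom_eq_span_mon V.dim_eq_card_independent)
qed

lemma sandwich_in_hom:
  assumes g: "g \<in> hom d" and u: "set u \<subseteq> {0,1,2}" and v: "set v \<subseteq> {0,1,2}"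
  shows "sandwich u g v \<in> hom (length u + d + length v)"
proof -
  have "{w. sandwich u g v w \<noteq> 0} \<subseteq> (\<lambda>w'. u @ w' @ v) ` {w. g w \<noteq> 0}"
    using sandwich_nonzero by blast
  moreover have "finite {w. g w \<noteq> 0}"
    using g by (auto simp: hom_def FA_def)
  moreover have "set w \<subseteq> {0,1,2} \<and> length w = length u + d + length v"
    if nz: "sandwich u g v w \<noteq> 0" for w
  proof -
    obtain w' where w': "w = u @ w' @ v" "g w' \<noteq> 0"
      using sandwich_nonzero[OF nz] by blast
    then have "set w' \<subseteq> {0,1,2}" "length w' = d"
      using g by (auto simp: hom_def FA_def)
    with w' u v show ?thesis
      by auto
  qed
  ultimately show ?thesis
    by (auto simp: hom_def FA_def intro: finite_surj)
qed

section \<open>The ideal in a fixed degree\<close>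

lemma mon_in_FA: "set u \<subseteq> {0,1,2} \<Longrightarrow> mon u \<in> FA"
  by (auto simp: FA_def mon_def)

lemma FA_expansion: "a \<in> FA \<Longrightarrow> a = (\<Sum>u\<in>supp a. ncsc (a u) (mon u))"
  by (rule expansion_in_mon) (auto simp: FA_def supp_def)

lemma ncmul_FA_expansion:
  assumes "a \<in> FA" "b \<in> FA"
  shows "ncmul (ncmul a g) b = (\<Sum>u\<in>supp a. ncsc (a u) (\<Sum>v\<in>supp b. ncsc (b v) (sandwich u g v)))"
proof -
  have "ncmul (ncmul a g) b = ncmul (ncmul (\<Sum>u\<in>supp a. ncsc (a u) (mon u)) g) b"
    using FA_expansion[OF assms(1)] by metis
  also have "\<dots> = (\<Sum>u\<in>supp a. ncsc (a u) (ncmul (ncmul (mon u) g) b))"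
    by (simp only: ncmul_sum_left)
  also have "\<dots> = (\<Sum>u\<in>supp a. ncsc (a u) (ncmul (ncmul (mon u) g) (\<Sum>v\<in>supp b. ncsc (b v) (mon v))))"
    using FA_expansion[OF assms(2)] by metis
  also have "\<dots> = (\<Sum>u\<in>supp a. ncsc (a u) (\<Sum>v\<in>supp b. ncsc (b v) (sandwich u g v)))"
    by (simp only: ncmul_sum_right sandwich_def)
  finally show ?thesis .
qed

definition deg_part :: "nat \<Rightarrow> ncpoly \<Rightarrow> ncpoly" where
  "deg_part k f = (\<lambda>w. if length w = k then f w else 0)"

lemma deg_part_sum: "deg_part k (\<Sum>i\<in>A. ncsc (c i) (F i)) = (\<Sum>i\<in>A. ncsc (c i) (deg_part k (F i)))"
  by (auto simp: deg_part_def fun_eq_iff sum_apply)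

lemma deg_part_hom: "f \<in> hom d \<Longrightarrow> deg_part k f = (if d = k then f else 0)"
  by (auto simp: deg_part_def fun_eq_iff hom_def)

lemma subspace_deg_part_preimage: "V.subspace {f. deg_part k f \<in> V.span E}"
  unfolding V.subspace_def
proof (intro conjI ballI allI)
  have "deg_part k 0 = 0"
    by (simp add: deg_part_def fun_eq_iff)
  then show "0 \<in> {f. deg_part k f \<in> V.span E}"
    by (simp add: V.span_zero)
  fix f g assume "f \<in> {f. deg_part k f \<in> V.span E}" "g \<in> {f. deg_part k f \<in> V.span E}"
  moreover have "deg_part k (f + g) = deg_part k f + deg_part k g"
    by (auto simp: deg_part_def fun_eq_iff)
  ultimately show "f + g \<in> {f. deg_part k f \<in> V.span E}"
    by (simp add: V.span_add)
next
  fix c f assume "f \<in> {f. deg_part k f \<in> V.span E}"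
  moreover have "deg_part k (ncsc c f) = ncsc c (deg_part k f)"
    by (auto simp: deg_part_def fun_eq_iff)
  ultimately show "ncsc c f \<in> {f. deg_part k f \<in> V.span E}"
    by (simp add: V.span_scale)
qed

definition deg_sandwiches :: "ncpoly set \<Rightarrow> nat \<Rightarrow> ncpoly set" where
  "deg_sandwiches G k = {p \<in> hom k. \<exists>u g v. g \<in> G \<and> set u \<subseteq> {0,1,2} \<and> set v \<subseteq> {0,1,2} \<and> p = sandwich u g v}"

lemma deg_sandwiches_subset: "deg_sandwiches G k \<subseteq> ideal_gen G \<inter> hom k"
proof
  fix p assume "p \<in> deg_sandwiches G k"
  then obtain u g v where p: "p \<in> hom k" "g \<in> G" "set u \<subseteq> {0,1,2}" "set v \<subseteq> {0,1,2}"
      "p = sandwich u g v"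
    unfolding deg_sandwiches_def by blast
  then have "p \<in> {ncmul (ncmul a g) b | a g b. a \<in> FA \<and> g \<in> G \<and> b \<in> FA}"
    using mon_in_FA unfolding sandwich_def by blast
  then have "p \<in> ideal_gen G"
    unfolding ideal_gen_def ncspan_eq by (rule V.span_base)
  with p(1) show "p \<in> ideal_gen G \<inter> hom k"
    by blast
qed

lemma deg_part_sandwich_in_span:
  assumes "g \<in> G" "g \<in> hom d" and letters: "set u \<subseteq> {0,1,2}" "set v \<subseteq> {0,1,2}"
  shows "deg_part k (sandwich u g v) \<in> V.span (deg_sandwiches G k)"
proof -
  have h: "sandwich u g v \<in> hom (length u + d + length v)"
    by (rule sandwich_in_hom[OF assms(2) letters])
  show ?thesis
  proof (cases "length u + d + length v = k")
    case True
    with h letters assms(1) have "sandwich u g v \<in> deg_sandwiches G k"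
      unfolding deg_sandwiches_def by auto
    with h True show ?thesis
      by (simp add: deg_part_hom V.span_base)
  next
    case False
    with h show ?thesis
      by (simp add: deg_part_hom V.span_zero)
  qed
qed

lemma deg_part_product_in_span:
  assumes "a \<in> FA" "b \<in> FA" "g \<in> G" "g \<in> hom d"
  shows "deg_part k (ncmul (ncmul a g) b) \<in> V.span (deg_sandwiches G k)"
proof -
  have "deg_part k (sandwich u g v) \<in> V.span (deg_sandwiches G k)"
    if "u \<in> supp a" "v \<in> supp b" for u v
    using that assms by (intro deg_part_sandwich_in_span) (auto simp: FA_def supp_def)
  then show ?thesis
    unfolding ncmul_FA_expansion[OF assms(1,2)] deg_part_sum
    by (intro V.span_sum V.span_scale) auto
qed

lemma ideal_gen_Int_hom:
  assumes homogeneous: "\<And>g. g \<in> G \<Longrightarrow> \<exists>d. g \<in> hom d"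
  shows "ideal_gen G \<inter> hom k = V.span (deg_sandwiches G k)"
proof
  show "V.span (deg_sandwiches G k) \<subseteq> ideal_gen G \<inter> hom k"
    using deg_sandwiches_subset
    by (rule V.span_minimal) (simp add: V.subspace_inter hom_subspace ideal_gen_def ncspan_eq)
  show "ideal_gen G \<inter> hom k \<subseteq> V.span (deg_sandwiches G k)"
  proof
    fix f assume f: "f \<in> ideal_gen G \<inter> hom k"
    have "deg_part k f \<in> V.span (deg_sandwiches G k)"
    proof (rule V.span_induct[where P = "\<lambda>f. deg_part k f \<in> V.span (deg_sandwiches G k)"])
      show "f \<in> V.span {ncmul (ncmul a g) b | a g b. a \<in> FA \<and> g \<in> G \<and> b \<in> FA}"
        using f by (simp add: ideal_gen_def ncspan_eq)
      show "V.subspace {f. deg_part k f \<in> V.span (deg_sandwiches G k)}"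
        by (rule subspace_deg_part_preimage)
      fix p assume "p \<in> {ncmul (ncmul a g) b | a g b. a \<in> FA \<and> g \<in> G \<and> b \<in> FA}"
      with homogeneous show "deg_part k p \<in> V.span (deg_sandwiches G k)"
        by (blast intro: deg_part_product_in_span)
    qed
    with f show "f \<in> V.span (deg_sandwiches G k)"
      using deg_part_hom[of f k k] by simp
  qed
qed

section \<open>Words containing a square\<close>

fun has_square :: "nat list \<Rightarrow> bool" where
  "has_square (a # b # w) = (a = b \<or> has_square (b # w))"
| "has_square _ = False"

lemma has_square_Cons: "has_square w \<Longrightarrow> has_square (c # w)"
  by (cases w rule: has_square.cases) auto

lemma has_square_iff: "has_square w \<longleftrightarrow> (\<exists>u a v. w = u @ [a, a] @ v)"
proof
  show "has_square w \<Longrightarrow> \<exists>u a v. w = u @ [a, a] @ v"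
  proof (induction w rule: has_square.induct)
    case (1 a b w)
    show ?case
    proof (cases "a = b")
      case True
      then have "a # b # w = [] @ [a, a] @ w"
        by simp
      then show ?thesis
        by blast
    next
      case False
      with 1 obtain u c v where "b # w = u @ [c, c] @ v"
        by auto
      then have "a # b # w = (a # u) @ [c, c] @ v"
        by simp
      then show ?thesis
        by blast
    qed
  qed auto
  show "\<exists>u a v. w = u @ [a, a] @ v \<Longrightarrow> has_square w"
  proof (elim exE)
    fix u a v assume "w = u @ [a, a] @ v"
    then show "has_square w"
      by (induction u arbitrary: w) (auto intro: has_square_Cons)
  qed
qed

definition square_words :: "nat \<Rightarrow> nat list set" where
  "square_words k = {w \<in> words k. has_square w}"

lemma finite_square_words [simp]: "finite (square_words k)"
  by (simp add: square_words_def)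

fun word_list :: "nat \<Rightarrow> nat list list" where
  "word_list 0 = [[]]"
| "word_list (Suc k) = concat (map (\<lambda>a. map ((#) a) (word_list k)) [0,1,2])"

lemma set_word_list: "set (word_list k) = words k"
proof (induction k)
  case 0
  then show ?case
    by (auto simp: words_def)
next
  case (Suc k)
  then show ?case
    by (auto simp: words_def length_Suc_conv)
qed

lemma distinct_word_list: "distinct (word_list k)"
  by (induction k) (auto simp: distinct_map distinct_concat_iff)

lemma card_square_words: "card (square_words k) = length (filter has_square (word_list k))"
proof -
  have "square_words k = set (filter has_square (word_list k))"
    by (auto simp: square_words_def set_word_list)
  then show ?thesis
    by (metis distinct_card distinct_filter distinct_word_list)
qed

lemma card_square_words_le_4:
  "card (square_words 0) = 0" "card (square_words 1) = 0" "card (square_words 2) = 3"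
  "card (square_words 3) = 15" "card (square_words 4) = 57"
  by (simp_all add: card_square_words numeral_eq_Suc)

definition square_free_words_4 :: "nat list list" where
  "square_free_words_4 =
    [[0,1,0,1],[0,1,0,2],[0,1,2,0],[0,1,2,1],[0,2,0,1],[0,2,0,2],[0,2,1,0],[0,2,1,2],
     [1,0,1,0],[1,0,1,2],[1,0,2,0],[1,0,2,1],[1,2,0,1],[1,2,0,2],[1,2,1,0],[1,2,1,2],
     [2,0,1,0],[2,0,1,2],[2,0,2,0],[2,0,2,1],[2,1,0,1],[2,1,0,2],[2,1,2,0],[2,1,2,1]]"

lemma mem_square_free_words_4:
  assumes "x \<in> words 4" "x \<notin> square_words 4"
  shows "x \<in> set square_free_words_4"
proof -
  have "x \<in> set (filter (Not \<circ> has_square) (word_list 4))"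
    using assms by (simp add: set_word_list square_words_def)
  then show ?thesis
    by (simp add: square_free_words_4_def numeral_eq_Suc)
qed

section \<open>Independence modulo monomials\<close>

definition indep_off :: "nat list set \<Rightarrow> ncpoly list \<Rightarrow> bool" where
  "indep_off N L \<longleftrightarrow>
     (\<forall>d. (\<forall>x. x \<notin> N \<longrightarrow> (\<Sum>j<length L. d j * (L ! j) x) = 0) \<longrightarrow> (\<forall>j<length L. d j = 0))"

lemma indep_off_combination_eq_0:
  assumes fin: "finite N" and indep: "indep_off N L"
    and sum0: "(\<Sum>w\<in>N. ncsc (a w) (mon w)) + (\<Sum>j<length L. ncsc (d j) (L ! j)) = 0"
  shows "(\<forall>j<length L. d j = 0) \<and> (\<forall>w\<in>N. a w = 0)"
proof -
  have "(\<Sum>j<length L. d j * (L ! j) x) = 0" if "x \<notin> N" for x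
  proof -
    have "(\<Sum>w\<in>N. ncsc (a w) (mon w)) x = 0"
      using that unfolding sum_apply by (intro sum.neutral) (auto simp: mon_def)
    moreover have "(\<Sum>w\<in>N. ncsc (a w) (mon w)) x + (\<Sum>j<length L. ncsc (d j) (L ! j)) x = 0"
      using fun_cong[OF sum0, of x] by simp
    ultimately have "(\<Sum>j<length L. ncsc (d j) (L ! j)) x = 0"
      by simp
    then show ?thesis
      by (simp only: sum_apply ncsc_apply)
  qed
  with indep have d0: "\<forall>j<length L. d j = 0"
    unfolding indep_off_def by blast
  then have "(\<Sum>j<length L. ncsc (d j) (L ! j)) = 0"
    by (intro sum.neutral) (auto simp: ncsc_def fun_eq_iff)
  with sum0 have "(\<Sum>w\<in>N. ncsc (a w) (mon w)) = 0"
    by simp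
  with d0 show ?thesis
    using mon_sum_eq_0_imp_coeff_eq_0[OF fin, of a] by blast
qed

lemma dim_span_mon_Un:
  assumes fin: "finite N" and indep: "indep_off N L"
  shows "V.dim (V.span (mon ` N \<union> set L)) = card N + length L"
proof -
  define I where "I = N <+> {..<length L}"
  define F where "F = case_sum mon (\<lambda>j. L ! j)"
  have "F ` I = mon ` N \<union> set L"
    by (auto simp: I_def F_def Plus_def image_Un image_image set_conv_nth)
  moreover have "V.independent (F ` I) \<and> card (F ` I) = card I"
  proof (rule independent_image_if_scalars_zero)
    show "finite I"
      using fin by (simp add: I_def)
    fix c assume "(\<Sum>i\<in>I. ncsc (c i) (F i)) = 0"
    then have "(\<Sum>w\<in>N. ncsc (c (Inl w)) (mon w)) + (\<Sum>j<length L. ncsc (c (Inr j)) (L ! j)) = 0"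
      using fin by (simp add: I_def F_def sum.Plus)
    then have "(\<forall>j<length L. c (Inr j) = 0) \<and> (\<forall>w\<in>N. c (Inl w) = 0)"
      by (rule indep_off_combination_eq_0[OF fin indep])
    then show "\<forall>i\<in>I. c i = 0"
      by (auto simp: I_def)
  qed
  moreover have "card I = card N + length L"
    using fin by (simp add: I_def card_Plus)
  ultimately show ?thesis
    by (metis V.dim_span_eq_card_independent)
qed

section \<open>The quotient algebra \<open>S\<^sub>p\<close>\<close>

definition cubic_sandwiches :: "ncpoly set \<Rightarrow> nat \<Rightarrow> ncpoly set" where
  "cubic_sandwiches G k =
     {sandwich u g v | u g v. g \<in> G \<and> set u \<subseteq> {0,1,2} \<and> set v \<subseteq> {0,1,2} \<and> length u + length v + 3 = k}"

lemma deg_sandwiches_squares_Un_subset: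
  assumes cubic: "G \<subseteq> hom 3"
  shows "deg_sandwiches ({mon [0,0], mon [1,1], mon [2,2]} \<union> G) k
       \<subseteq> V.span (mon ` square_words k \<union> cubic_sandwiches G k)"
proof
  fix p assume "p \<in> deg_sandwiches ({mon [0,0], mon [1,1], mon [2,2]} \<union> G) k"
  then obtain u g v where p: "p \<in> hom k" "g \<in> {mon [0,0], mon [1,1], mon [2,2]} \<union> G"
      "set u \<subseteq> {0,1,2}" "set v \<subseteq> {0,1,2}" "p = sandwich u g v"
    unfolding deg_sandwiches_def by blast
  show "p \<in> V.span (mon ` square_words k \<union> cubic_sandwiches G k)"
  proof (cases "g \<in> G")
    case g: True
    then have hp: "p \<in> hom (length u + 3 + length v)"
      using cubic sandwich_in_hom p(3-5) by blast
    show ?thesis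
    proof (cases "length u + length v + 3 = k")
      case True
      with g p(3-5) have "p \<in> cubic_sandwiches G k"
        unfolding cubic_sandwiches_def by blast
      then show ?thesis
        by (auto intro: V.span_base)
    next
      case False
      then have "p = 0"
        using hom_eq_0_if_other_degree[OF p(1) hp] by simp
      then show ?thesis
        by (simp add: V.span_zero)
    qed
  next
    case False
    then obtain a where "g = mon [a, a]"
      using p(2) by auto
    then have pw: "p = mon (u @ [a, a] @ v)"
      using p(5) by (simp add: sandwich_mon)
    with p(1) have "u @ [a, a] @ v \<in> square_words k"
      by (auto simp: square_words_def has_square_iff mon_in_hom_iff)
    with pw show ?thesis
      by (auto intro: V.span_base)
  qed
qed

lemma squares_Un_cubic_sandwiches_subset:
  assumes cubic: "G \<subseteq> hom 3"
  shows "mon ` square_words k \<union> cubic_sandwiches G k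
       \<subseteq> deg_sandwiches ({mon [0,0], mon [1,1], mon [2,2]} \<union> G) k"
proof
  fix p assume "p \<in> mon ` square_words k \<union> cubic_sandwiches G k"
  then show "p \<in> deg_sandwiches ({mon [0,0], mon [1,1], mon [2,2]} \<union> G) k"
  proof
    assume "p \<in> mon ` square_words k"
    then obtain u a v where w: "u @ [a, a] @ v \<in> words k" "p = mon (u @ [a, a] @ v)"
      by (auto simp: square_words_def has_square_iff)
    then have "p = sandwich u (mon [a, a]) v" "p \<in> hom k" "a \<in> {0,1,2}"
              "set u \<subseteq> {0,1,2}" "set v \<subseteq> {0,1,2}"
      by (auto simp: sandwich_mon mon_in_hom_iff words_def)
    then show ?thesis
      unfolding deg_sandwiches_def by blast
  next
    assume "p \<in> cubic_sandwiches G k"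
    then obtain u g v where p: "g \<in> G" "set u \<subseteq> {0,1,2}" "set v \<subseteq> {0,1,2}"
        "length u + length v + 3 = k" "p = sandwich u g v"
      unfolding cubic_sandwiches_def by blast
    then have "p \<in> hom k"
      using sandwich_in_hom[of g 3 u v] cubic by (auto simp: ac_simps)
    with p show ?thesis
      unfolding deg_sandwiches_def by blast
  qed
qed

lemma span_deg_sandwiches_squares_Un:
  assumes "G \<subseteq> hom 3"
  shows "V.span (deg_sandwiches ({mon [0,0], mon [1,1], mon [2,2]} \<union> G) k)
       = V.span (mon ` square_words k \<union> cubic_sandwiches G k)"
  unfolding V.span_eq
  using deg_sandwiches_squares_Un_subset[OF assms] squares_Un_cubic_sandwiches_subset[OF assms]
    V.span_superset by blast

lemma gen1_in_hom3: "gen1 \<omega> A B \<in> hom 3"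
  and gen2_in_hom3: "gen2 \<omega> A B \<in> hom 3"
proof -
  have supp_hom3: "g \<in> hom 3"
    if "\<And>w. g w \<noteq> 0 \<Longrightarrow> w \<in> {[2,0,1],[0,1,2],[1,2,0],[1,0,2],[2,1,0],[0,2,1]}"
    for g :: ncpoly
  proof -
    have "finite {w. g w \<noteq> 0}"
      by (rule finite_subset[of _ "{[2,0,1],[0,1,2],[1,2,0],[1,0,2],[2,1,0],[0,2,1]}"]) (use that in auto)
    with that show ?thesis
      unfolding hom_def FA_def by fastforce
  qed
  show "gen1 \<omega> A B \<in> hom 3"
    by (rule supp_hom3, rule ccontr) (simp add: gen1_def mon_def)
  show "gen2 \<omega> A B \<in> hom 3"
    by (rule supp_hom3, rule ccontr) (simp add: gen2_def mon_def)
qed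

lemma quot_dim_Sp_rels:
  "quot_dim (Sp_rels \<omega> A1 B1 A2 B2) k
     = 3 ^ k - V.dim (V.span (mon ` square_words k \<union> cubic_sandwiches {gen1 \<omega> A1 B1, gen2 \<omega> A2 B2} k))"
proof -
  have rels: "Sp_rels \<omega> A1 B1 A2 B2 = {mon [0,0], mon [1,1], mon [2,2]} \<union> {gen1 \<omega> A1 B1, gen2 \<omega> A2 B2}"
    by (auto simp: Sp_rels_def)
  have "\<exists>d. g \<in> hom d" if "g \<in> Sp_rels \<omega> A1 B1 A2 B2" for g
  proof -
    have "g \<in> hom 2 \<or> g \<in> hom 3"
      using that gen1_in_hom3 gen2_in_hom3 by (auto simp: Sp_rels_def mon_in_hom_iff words_def)
    then show ?thesis
      by blast
  qed
  then have "ideal_gen (Sp_rels \<omega> A1 B1 A2 B2) \<inter> hom k = V.span (deg_sandwiches (Sp_rels \<omega> A1 B1 A2 B2) k)"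
    by (rule ideal_gen_Int_hom)
  also have "\<dots> = V.span (mon ` square_words k \<union> cubic_sandwiches {gen1 \<omega> A1 B1, gen2 \<omega> A2 B2} k)"
    unfolding rels by (rule span_deg_sandwiches_squares_Un) (simp add: gen1_in_hom3 gen2_in_hom3)
  finally show ?thesis
    unfolding quot_dim_def ncdim_hom by (simp add: ncdim_eq)
qed

lemma cubic_sandwiches_less_3: "k < 3 \<Longrightarrow> cubic_sandwiches G k = {}"
  by (auto simp: cubic_sandwiches_def)

lemma cubic_sandwiches_3: "cubic_sandwiches G 3 = G"
  by (auto simp: cubic_sandwiches_def sandwich_Nil_Nil intro: exI[of _ "[]"])

definition letter_sandwiches :: "ncpoly \<Rightarrow> ncpoly \<Rightarrow> ncpoly list" where
  "letter_sandwiches g1 g2 =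
     [sandwich [0] g1 [], sandwich [1] g1 [], sandwich [2] g1 [],
      sandwich [0] g2 [], sandwich [1] g2 [], sandwich [2] g2 [],
      sandwich [] g1 [0], sandwich [] g1 [1], sandwich [] g1 [2],
      sandwich [] g2 [0], sandwich [] g2 [1], sandwich [] g2 [2]]"

lemma cubic_sandwiches_4: "cubic_sandwiches {g1, g2} 4 = set (letter_sandwiches g1 g2)"
proof
  show "cubic_sandwiches {g1, g2} 4 \<subseteq> set (letter_sandwiches g1 g2)"
  proof
    fix p assume "p \<in> cubic_sandwiches {g1, g2} 4"
    then obtain u g v where p: "g \<in> {g1, g2}" "set u \<subseteq> {0,1,2}" "set v \<subseteq> {0,1,2}"
        "length u + length v = 1" "p = sandwich u g v"
      unfolding cubic_sandwiches_def by auto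
    then consider a where "u = [a]" "v = []" "a \<in> {0,1,2}" | a where "u = []" "v = [a]" "a \<in> {0,1,2}"
      by (cases u; cases v) auto
    then show "p \<in> set (letter_sandwiches g1 g2)"
      using p(1,5) by cases (auto simp: letter_sandwiches_def)
  qed
  have sandwich_in: "sandwich u g v \<in> cubic_sandwiches {g1, g2} 4"
    if "g \<in> {g1, g2}" "set u \<subseteq> {0,1,2}" "set v \<subseteq> {0,1,2}" "length u + length v + 3 = 4" for u g v
    unfolding cubic_sandwiches_def using that by blast
  show "set (letter_sandwiches g1 g2) \<subseteq> cubic_sandwiches {g1, g2} 4"
    unfolding letter_sandwiches_def by (auto intro!: sandwich_in)
qed

section \<open>Linear algebra in degrees 3 and 4\<close>

lemma cramer_2x2:
  fixes X Y :: "'a :: field"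
  assumes "\<alpha> * X + \<beta> * Y = 0" "\<gamma> * X + \<delta> * Y = 0" "\<alpha> * \<delta> - \<beta> * \<gamma> \<noteq> 0"
  shows "X = 0 \<and> Y = 0"
proof -
  have "(\<alpha> * \<delta> - \<beta> * \<gamma>) * X = \<delta> * (\<alpha> * X + \<beta> * Y) - \<beta> * (\<gamma> * X + \<delta> * Y)"
    by (simp add: algebra_simps)
  then have "X = 0"
    using assms by simp
  have "(\<alpha> * \<delta> - \<beta> * \<gamma>) * Y = \<alpha> * (\<gamma> * X + \<delta> * Y) - \<gamma> * (\<alpha> * X + \<beta> * Y)"
    by (simp add: algebra_simps)
  then have "Y = 0"
    using assms by simp
  with \<open>X = 0\<close> show ?thesis
    by simp
qed

lemma cube_eq_1_powers:
  fixes \<omega> :: "'a :: comm_monoid_mult"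
  assumes "\<omega> ^ 3 = 1"
  shows "\<omega> * (\<omega> * \<omega>) = 1" "\<omega> ^ 4 = \<omega>" "\<omega>\<^sup>2 * \<omega>\<^sup>2 = \<omega>"
proof -
  show "\<omega> * (\<omega> * \<omega>) = 1"
    using assms by (simp add: power3_eq_cube mult.assoc)
  have "\<omega> ^ 4 = \<omega> ^ 3 * \<omega>" "\<omega>\<^sup>2 * \<omega>\<^sup>2 = \<omega> ^ 3 * \<omega>"
    by (simp_all add: eval_nat_numeral ac_simps)
  with assms show "\<omega> ^ 4 = \<omega>" "\<omega>\<^sup>2 * \<omega>\<^sup>2 = \<omega>"
    by simp_all
qed

lemma cube_root_of_unity:
  fixes \<omega> :: complex
  assumes "\<omega> ^ 3 = 1" "\<omega> \<noteq> 1"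
  shows "\<omega> \<noteq> 0" "\<omega>\<^sup>2 \<noteq> \<omega>" "\<omega>\<^sup>2 \<noteq> 1"
proof -
  show "\<omega> \<noteq> 0"
    using assms by auto
  then show "\<omega>\<^sup>2 \<noteq> \<omega>"
    using assms by (auto simp: power2_eq_square power3_eq_cube)
  show "\<omega>\<^sup>2 \<noteq> 1"
    using assms by (auto simp: power2_eq_square power3_eq_cube)
qed

lemmas eval_simps =
  sandwich_letter_left sandwich_letter_right gen1_def gen2_def mon_def square_words_def words_def
  lessThan_nat_numeral eval_nat_numeral algebra_simps

lemma indep_off_gens:
  fixes \<omega> A1 B1 A2 B2 :: complex
  assumes \<omega>: "\<omega> ^ 3 = 1" "\<omega> \<noteq> 1" and "(A1, B1) \<noteq> (0, 0)" "(A2, B2) \<noteq> (0, 0)"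
  shows "indep_off (square_words 3) [gen1 \<omega> A1 B1, gen2 \<omega> A2 B2]"
  unfolding indep_off_def
proof (rule allI, rule impI)
  fix d assume H: "\<forall>x. x \<notin> square_words 3 \<longrightarrow>
      (\<Sum>j<length [gen1 \<omega> A1 B1, gen2 \<omega> A2 B2]. d j * ([gen1 \<omega> A1 B1, gen2 \<omega> A2 B2] ! j) x) = 0"
  have det: "1 * \<omega>\<^sup>2 - 1 * \<omega> \<noteq> 0"
    using cube_root_of_unity[OF \<omega>] by simp
  have "1 * (A1 * d 0) + 1 * (A2 * d 1) = 0"
    using H[rule_format, of "[2,0,1]"] by (simp add: eval_simps)
  moreover have "\<omega> * (A1 * d 0) + \<omega>\<^sup>2 * (A2 * d 1) = 0"
    using H[rule_format, of "[0,1,2]"] by (simp add: eval_simps)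
  ultimately have A: "A1 * d 0 = 0 \<and> A2 * d 1 = 0"
    using cramer_2x2 det by blast
  have "1 * (B1 * d 0) + 1 * (B2 * d 1) = 0"
    using H[rule_format, of "[1,0,2]"] by (simp add: eval_simps)
  moreover have "\<omega> * (B1 * d 0) + \<omega>\<^sup>2 * (B2 * d 1) = 0"
    using H[rule_format, of "[2,1,0]"] by (simp add: eval_simps)
  ultimately have B: "B1 * d 0 = 0 \<and> B2 * d 1 = 0"
    using cramer_2x2 det by blast
  from A B assms(3,4) show "\<forall>j<length [gen1 \<omega> A1 B1, gen2 \<omega> A2 B2]. d j = 0"
    by (auto simp: less_Suc_eq)
qed

lemma quot_dim_Sp_rels_le_3:
  fixes \<omega> A1 B1 A2 B2 :: complex
  assumes "\<omega> ^ 3 = 1" "\<omega> \<noteq> 1" "(A1, B1) \<noteq> (0, 0)" "(A2, B2) \<noteq> (0, 0)" and "k \<le> 3"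
  shows "quot_dim (Sp_rels \<omega> A1 B1 A2 B2) k = (k + 2) choose 2"
proof (cases "k = 3")
  case True
  have "V.dim (V.span (mon ` square_words 3 \<union> set [gen1 \<omega> A1 B1, gen2 \<omega> A2 B2])) = 15 + 2"
    using dim_span_mon_Un[OF _ indep_off_gens[OF assms(1-4)]] by (simp add: card_square_words_le_4)
  with True show ?thesis
    by (simp add: quot_dim_Sp_rels cubic_sandwiches_3 choose_two)
next
  case False
  with assms(5) have "k < 3"
    by simp
  then have "quot_dim (Sp_rels \<omega> A1 B1 A2 B2) k = 3 ^ k - card (square_words k)"
    using dim_span_mon_Un[of "square_words k" "[]"]
    by (simp add: quot_dim_Sp_rels cubic_sandwiches_less_3 indep_off_def)
  moreover have "k = 0 \<or> k = 1 \<or> k = 2"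
    using \<open>k < 3\<close> by auto
  ultimately show ?thesis
    by (auto simp: card_square_words choose_two numeral_2_eq_2)
qed

lemma cramer_2x2_scaled:
  fixes p q :: "'a :: field"
  assumes "a \<noteq> 0" "b \<noteq> 0" "A1 * B2 - A2 * B1 \<noteq> 0"
    and "a * A1 * p + b * A2 * q = 0" "a * B1 * p + b * B2 * q = 0"
  shows "p = 0 \<and> q = 0"
proof (rule cramer_2x2[OF assms(4,5)])
  have "a * A1 * (b * B2) - b * A2 * (a * B1) = a * b * (A1 * B2 - A2 * B1)"
    by (simp add: algebra_simps)
  with assms(1-3) show "a * A1 * (b * B2) - b * A2 * (a * B1) \<noteq> 0"
    by simp
qed

lemma indep_off_letter_sandwiches:
  fixes \<omega> A1 B1 A2 B2 :: complex
  assumes \<omega>: "\<omega> ^ 3 = 1" "\<omega> \<noteq> 1" and det: "A1 * B2 - A2 * B1 \<noteq> 0"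
  shows "indep_off (square_words 4) (letter_sandwiches (gen1 \<omega> A1 B1) (gen2 \<omega> A2 B2))"
  unfolding indep_off_def
proof (rule allI, rule impI)
  let ?L = "letter_sandwiches (gen1 \<omega> A1 B1) (gen2 \<omega> A2 B2)"
  fix d assume "\<forall>x. x \<notin> square_words 4 \<longrightarrow> (\<Sum>j<length ?L. d j * (?L ! j) x) = 0"
  note H = this[rule_format]
  note simps = eval_simps letter_sandwiches_def
  have nz: "(1::complex) \<noteq> 0" "\<omega> \<noteq> 0" "\<omega>\<^sup>2 \<noteq> 0"
    using cube_root_of_unity[OF \<omega>] by simp_all
  txt \<open>Each test word occurs in exactly two of the twelve products.\<close>
  have "1 * A1 * d 0 + 1 * A2 * d 3 = 0"
    using H[of "[0,2,0,1]"] by (simp add: simps)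
  moreover have "1 * B1 * d 0 + 1 * B2 * d 3 = 0"
    using H[of "[0,1,0,2]"] by (simp add: simps)
  ultimately have d0_3: "d 0 = 0 \<and> d 3 = 0"
    using cramer_2x2_scaled[OF nz(1) nz(1) det] by blast
  have "\<omega> * A1 * d 1 + \<omega>\<^sup>2 * A2 * d 4 = 0"
    using H[of "[1,0,1,2]"] by (simp add: simps)
  moreover have "\<omega> * B1 * d 1 + \<omega>\<^sup>2 * B2 * d 4 = 0"
    using H[of "[1,2,1,0]"] by (simp add: simps)
  ultimately have d1_4: "d 1 = 0 \<and> d 4 = 0"
    using cramer_2x2_scaled[OF nz(2) nz(3) det] by blast
  have "\<omega>\<^sup>2 * A1 * d 2 + \<omega> * A2 * d 5 = 0"
    using H[of "[2,1,2,0]"] by (simp add: simps)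
  moreover have "\<omega>\<^sup>2 * B1 * d 2 + \<omega> * B2 * d 5 = 0"
    using H[of "[2,0,2,1]"] by (simp add: simps)
  ultimately have d2_5: "d 2 = 0 \<and> d 5 = 0"
    using cramer_2x2_scaled[OF nz(3) nz(2) det] by blast
  have "1 * A1 * d 6 + 1 * A2 * d 9 = 0"
    using H[of "[2,0,1,0]"] by (simp add: simps)
  moreover have "1 * B1 * d 6 + 1 * B2 * d 9 = 0"
    using H[of "[1,0,2,0]"] by (simp add: simps)
  ultimately have d6_9: "d 6 = 0 \<and> d 9 = 0"
    using cramer_2x2_scaled[OF nz(1) nz(1) det] by blast
  have "\<omega> * A1 * d 7 + \<omega>\<^sup>2 * A2 * d 10 = 0"
    using H[of "[0,1,2,1]"] by (simp add: simps)
  moreover have "\<omega> * B1 * d 7 + \<omega>\<^sup>2 * B2 * d 10 = 0"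
    using H[of "[2,1,0,1]"] by (simp add: simps)
  ultimately have d7_10: "d 7 = 0 \<and> d 10 = 0"
    using cramer_2x2_scaled[OF nz(2) nz(3) det] by blast
  have "\<omega>\<^sup>2 * A1 * d 8 + \<omega> * A2 * d 11 = 0"
    using H[of "[1,2,0,2]"] by (simp add: simps)
  moreover have "\<omega>\<^sup>2 * B1 * d 8 + \<omega> * B2 * d 11 = 0"
    using H[of "[0,2,1,2]"] by (simp add: simps)
  ultimately have d8_11: "d 8 = 0 \<and> d 11 = 0"
    using cramer_2x2_scaled[OF nz(3) nz(2) det] by blast
  have "\<forall>j\<in>{..<12}. d j = 0"
    using d0_3 d1_4 d2_5 d6_9 d7_10 d8_11 by (simp add: lessThan_nat_numeral)
  then show "\<forall>j<length ?L. d j = 0"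
    by (simp add: letter_sandwiches_def)
qed

definition reduced_letter_sandwiches :: "ncpoly \<Rightarrow> ncpoly \<Rightarrow> ncpoly list" where
  "reduced_letter_sandwiches g1 g2 =
     [sandwich [0] g1 [], sandwich [1] g1 [], sandwich [2] g1 [],
      sandwich [] g1 [0], sandwich [] g1 [1], sandwich [] g1 [2],
      sandwich [] g2 [0], sandwich [] g2 [1], sandwich [] g2 [2]]"

lemma indep_off_reduced_letter_sandwiches:
  fixes \<omega> A1 B1 A2 B2 :: complex
  assumes \<omega>: "\<omega> ^ 3 = 1" "\<omega> \<noteq> 1" and n1: "(A1, B1) \<noteq> (0, 0)" and n2: "(A2, B2) \<noteq> (0, 0)"
  shows "indep_off (square_words 4) (reduced_letter_sandwiches (gen1 \<omega> A1 B1) (gen2 \<omega> A2 B2))"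
  unfolding indep_off_def
proof (rule allI, rule impI)
  let ?L = "reduced_letter_sandwiches (gen1 \<omega> A1 B1) (gen2 \<omega> A2 B2)"
  fix d assume "\<forall>x. x \<notin> square_words 4 \<longrightarrow> (\<Sum>j<length ?L. d j * (?L ! j) x) = 0"
  note H = this[rule_format]
  note simps = eval_simps reduced_letter_sandwiches_def
  have nz: "\<omega> \<noteq> 0" "\<omega>\<^sup>2 \<noteq> \<omega>" "\<omega>\<^sup>2 \<noteq> 1"
    using cube_root_of_unity[OF \<omega>] by simp_all
  have \<omega>4: "\<omega>\<^sup>2 * \<omega>\<^sup>2 = \<omega>"
    using cube_eq_1_powers(3)[OF \<omega>(1)] .
  have det1: "1 * \<omega>\<^sup>2 - 1 * \<omega> \<noteq> 0" and det2: "1 * \<omega> - 1 * \<omega>\<^sup>2 \<noteq> 0"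
    and det3: "\<omega> * \<omega> - \<omega>\<^sup>2 * \<omega>\<^sup>2 \<noteq> 0" and det4: "\<omega> * 1 - \<omega>\<^sup>2 * 1 \<noteq> 0"
    and det5: "\<omega>\<^sup>2 * 1 - \<omega> * 1 \<noteq> 0" and det6: "\<omega>\<^sup>2 * \<omega>\<^sup>2 - \<omega> * \<omega> \<noteq> 0"
    using nz unfolding \<omega>4 by (simp_all add: power2_eq_square)
  have "1 * (A1 * d 0) = 0"
    using H[of "[0,2,0,1]"] by (simp add: simps)
  moreover have "1 * (B1 * d 0) = 0"
    using H[of "[0,1,0,2]"] by (simp add: simps)
  ultimately have d0: "d 0 = 0"
    using n1 by auto
  have "\<omega> * (A1 * d 1) = 0"
    using H[of "[1,0,1,2]"] by (simp add: simps)
  moreover have "\<omega> * (B1 * d 1) = 0"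
    using H[of "[1,2,1,0]"] by (simp add: simps)
  ultimately have d1: "d 1 = 0"
    using n1 nz by auto
  have "\<omega>\<^sup>2 * (A1 * d 2) = 0"
    using H[of "[2,1,2,0]"] by (simp add: simps)
  moreover have "\<omega>\<^sup>2 * (B1 * d 2) = 0"
    using H[of "[2,0,2,1]"] by (simp add: simps)
  ultimately have d2: "d 2 = 0"
    using n1 nz by auto
  have eqA3: "1 * (A1 * d 3) + 1 * (A2 * d 6) = 0"
    using H[of "[2,0,1,0]"] d0 by (simp add: simps)
  have eqA3': "\<omega> * (A1 * d 3) + \<omega>\<^sup>2 * (A2 * d 6) = 0"
    using H[of "[0,1,2,0]"] d0 by (simp add: simps)
  have eqB3: "1 * (B1 * d 3) + 1 * (B2 * d 6) = 0"
    using H[of "[1,0,2,0]"] d0 by (simp add: simps)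
  have eqB3': "\<omega>\<^sup>2 * (B1 * d 3) + \<omega> * (B2 * d 6) = 0"
    using H[of "[0,2,1,0]"] d0 by (simp add: simps)
  have "A1 * d 3 = 0 \<and> A2 * d 6 = 0" "B1 * d 3 = 0 \<and> B2 * d 6 = 0"
    using cramer_2x2[OF eqA3 eqA3' det1] cramer_2x2[OF eqB3 eqB3' det2] by simp_all
  with n1 n2 have d36: "d 3 = 0 \<and> d 6 = 0"
    by auto
  have eqA4: "\<omega> * (A1 * d 4) + \<omega>\<^sup>2 * (A2 * d 7) = 0"
    using H[of "[0,1,2,1]"] d1 by (simp add: simps)
  have eqA4': "\<omega>\<^sup>2 * (A1 * d 4) + \<omega> * (A2 * d 7) = 0"
    using H[of "[1,2,0,1]"] d1 by (simp add: simps)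
  have eqB4: "\<omega> * (B1 * d 4) + \<omega>\<^sup>2 * (B2 * d 7) = 0"
    using H[of "[2,1,0,1]"] d1 by (simp add: simps)
  have eqB4': "1 * (B1 * d 4) + 1 * (B2 * d 7) = 0"
    using H[of "[1,0,2,1]"] d1 by (simp add: simps)
  have "A1 * d 4 = 0 \<and> A2 * d 7 = 0" "B1 * d 4 = 0 \<and> B2 * d 7 = 0"
    using cramer_2x2[OF eqA4 eqA4' det3] cramer_2x2[OF eqB4 eqB4' det4] by simp_all
  with n1 n2 have d47: "d 4 = 0 \<and> d 7 = 0"
    by auto
  have eqA5: "\<omega>\<^sup>2 * (A1 * d 5) + \<omega> * (A2 * d 8) = 0"
    using H[of "[1,2,0,2]"] d2 by (simp add: simps)
  have eqA5': "1 * (A1 * d 5) + 1 * (A2 * d 8) = 0"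
    using H[of "[2,0,1,2]"] d2 by (simp add: simps)
  have eqB5: "\<omega>\<^sup>2 * (B1 * d 5) + \<omega> * (B2 * d 8) = 0"
    using H[of "[0,2,1,2]"] d2 by (simp add: simps)
  have eqB5': "\<omega> * (B1 * d 5) + \<omega>\<^sup>2 * (B2 * d 8) = 0"
    using H[of "[2,1,0,2]"] d2 by (simp add: simps)
  have "A1 * d 5 = 0 \<and> A2 * d 8 = 0" "B1 * d 5 = 0 \<and> B2 * d 8 = 0"
    using cramer_2x2[OF eqA5 eqA5' det5] cramer_2x2[OF eqB5 eqB5' det6] by simp_all
  with n1 n2 have d58: "d 5 = 0 \<and> d 8 = 0"
    by auto
  have "\<forall>j\<in>{..<9}. d j = 0"
    using d0 d1 d2 d36 d47 d58 by (simp add: lessThan_nat_numeral)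
  then show "\<forall>j<length ?L. d j = 0"
    by (simp add: reduced_letter_sandwiches_def)
qed

text \<open>Exchanging \<open>\<omega>\<close> and \<open>\<omega>\<^sup>2\<close> turns \<open>g\<^sub>1\<close> into \<open>g\<^sub>2\<close> and multiplies every square-free coefficient
  of \<open>a g + g a\<close> by \<open>\<omega>\<^sup>a\<close>; for \<open>a = x\<close>, e.g., the only coefficient depending on \<open>\<omega>\<close> is
  \<open>\<omega> + \<omega>\<^sup>2 = -1\<close>.\<close>

lemma anticommutator_gen2_congruent:
  fixes \<omega> c A B :: complex
  assumes \<omega>: "\<omega> ^ 3 = 1" and a: "a \<le> 2" and x: "x \<notin> square_words 4"
  shows "(sandwich [a] (gen2 \<omega> (c * A) (c * B)) [] + sandwich [] (gen2 \<omega> (c * A) (c * B)) [a]) x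
       = c * \<omega> ^ a * (sandwich [a] (gen1 \<omega> A B) [] + sandwich [] (gen1 \<omega> A B) [a]) x"
proof (cases "x \<in> words 4")
  case False
  have "set [a] \<subseteq> {0,1,2}"
    using a by auto
  then have vanish: "sandwich [a] g [] x = 0" "sandwich [] g [a] x = 0" if "g \<in> hom 3" for g
    using sandwich_in_hom[OF that, of "[a]" "[]"] sandwich_in_hom[OF that, of "[]" "[a]"]
      hom_vanishes[OF _ False] by simp_all
  show ?thesis
    using vanish[OF gen1_in_hom3] vanish[OF gen2_in_hom3] by simp
next
  case True
  with x have "x \<in> set square_free_words_4"
    by (intro mem_square_free_words_4)
  moreover have "a = 0 \<or> a = 1 \<or> a = 2"
    using a by auto
  ultimately show ?thesis
    unfolding square_free_words_4_def list.set
    by (elim disjE insertE emptyE)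
      (simp_all add: sandwich_letter_left sandwich_letter_right gen1_def gen2_def mon_def,
       simp_all add: algebra_simps power2_eq_square cube_eq_1_powers[OF \<omega>])
qed

lemma quot_dim_Sp_rels_4_generic:
  fixes \<omega> A1 B1 A2 B2 :: complex
  assumes "\<omega> ^ 3 = 1" "\<omega> \<noteq> 1" "A1 * B2 - A2 * B1 \<noteq> 0"
  shows "quot_dim (Sp_rels \<omega> A1 B1 A2 B2) 4 = 12"
proof -
  let ?L = "letter_sandwiches (gen1 \<omega> A1 B1) (gen2 \<omega> A2 B2)"
  have "length ?L = 12"
    by (simp add: letter_sandwiches_def)
  then have "V.dim (V.span (mon ` square_words 4 \<union> set ?L)) = 69"
    using dim_span_mon_Un[OF _ indep_off_letter_sandwiches[OF assms]] card_square_words_le_4 by simp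
  then show ?thesis
    by (simp add: quot_dim_Sp_rels cubic_sandwiches_4)
qed

lemma quot_dim_Sp_rels_4_degenerate:
  fixes \<omega> c A B :: complex
  assumes \<omega>: "\<omega> ^ 3 = 1" "\<omega> \<noteq> 1" and "(A, B) \<noteq> (0, 0)" "(c * A, c * B) \<noteq> (0, 0)"
  shows "quot_dim (Sp_rels \<omega> A B (c * A) (c * B)) 4 = 15"
proof -
  let ?g1 = "gen1 \<omega> A B" and ?g2 = "gen2 \<omega> (c * A) (c * B)"
  let ?L = "reduced_letter_sandwiches ?g1 ?g2"
  let ?S = "mon ` square_words 4 \<union> set ?L"
  have left_g2: "sandwich [a] ?g2 [] \<in> V.span ?S" if "a \<le> 2" for a
  proof -
    define r where "r = sandwich [a] ?g2 [] + sandwich [] ?g2 [a]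
                        - ncsc (c * \<omega> ^ a) (sandwich [a] ?g1 [] + sandwich [] ?g1 [a])"
    have "r x = 0" if "x \<notin> square_words 4" for x
      using anticommutator_gen2_congruent[OF \<omega>(1) \<open>a \<le> 2\<close> that] by (simp add: r_def)
    then have "supp r \<subseteq> square_words 4"
      unfolding supp_def by blast
    then have "r \<in> V.span (mon ` square_words 4)"
      by (simp add: in_span_mon_if_supp_subset)
    then have "r \<in> V.span ?S"
      using V.span_mono[OF Un_upper1] by blast
    moreover have "a = 0 \<or> a = 1 \<or> a = 2"
      using that by auto
    then have "sandwich [] ?g2 [a] \<in> V.span ?S" "sandwich [a] ?g1 [] \<in> V.span ?S"
              "sandwich [] ?g1 [a] \<in> V.span ?S"
      by (auto simp: reduced_letter_sandwiches_def intro: V.span_base)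
    moreover have "sandwich [a] ?g2 [] = r - sandwich [] ?g2 [a]
                     + ncsc (c * \<omega> ^ a) (sandwich [a] ?g1 [] + sandwich [] ?g1 [a])"
      by (simp add: r_def algebra_simps)
    ultimately show ?thesis
      by (metis V.span_add V.span_diff V.span_scale)
  qed
  have "V.span (mon ` square_words 4 \<union> set (letter_sandwiches ?g1 ?g2)) = V.span ?S"
  proof (subst V.span_eq, intro conjI)
    show "mon ` square_words 4 \<union> set (letter_sandwiches ?g1 ?g2) \<subseteq> V.span ?S"
      using left_g2[of 0] left_g2[of 1] left_g2[of 2]
      by (auto simp: letter_sandwiches_def reduced_letter_sandwiches_def intro: V.span_base)
    show "?S \<subseteq> V.span (mon ` square_words 4 \<union> set (letter_sandwiches ?g1 ?g2))"
      by (auto simp: letter_sandwiches_def reduced_letter_sandwiches_def intro: V.span_base)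
  qed
  moreover have "length ?L = 9"
    by (simp add: reduced_letter_sandwiches_def)
  then have "V.dim (V.span ?S) = 66"
    using dim_span_mon_Un[OF _ indep_off_reduced_letter_sandwiches[OF \<omega> assms(3,4)]]
      card_square_words_le_4 by simp
  ultimately show ?thesis
    by (simp add: quot_dim_Sp_rels cubic_sandwiches_4)
qed

lemma proportional_if_det_eq_0:
  fixes A1 B1 A2 B2 :: "'a :: field"
  assumes "(A1, B1) \<noteq> (0, 0)" "A1 * B2 - A2 * B1 = 0"
  obtains c where "A2 = c * A1" "B2 = c * B1"
proof (cases "A1 = 0")
  case True
  with assms have "B1 \<noteq> 0" "A2 = 0"
    by auto
  with True show ?thesis
    using that[of "B2 / B1"] by simp
next
  case False
  with assms(2) have "B2 = A2 / A1 * B1"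
    by (simp add: field_simps)
  with False show ?thesis
    using that[of "A2 / A1"] by simp
qed

theorem mainTheorem9:
  fixes \<omega> A1 B1 A2 B2 :: complex
  assumes "\<omega> ^ 3 = 1" and "\<omega> \<noteq> 1"
    and "(A1, B1) \<noteq> (0, 0)" and "(A2, B2) \<noteq> (0, 0)"
  shows "(\<forall>k\<le>4. quot_dim (Sp_rels \<omega> A1 B1 A2 B2) k = (k + 2) choose 2)
         \<longleftrightarrow> A1 * B2 - A2 * B1 = 0"
proof -
  let ?q = "quot_dim (Sp_rels \<omega> A1 B1 A2 B2)"
  have le_4: "k \<le> 4 \<longleftrightarrow> k \<le> 3 \<or> k = 4" for k :: nat
    by auto
  have "(\<forall>k\<le>4. ?q k = (k + 2) choose 2) \<longleftrightarrow> ?q 4 = 15"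
    using quot_dim_Sp_rels_le_3[OF assms] by (auto simp: le_4 choose_two)
  also have "?q 4 = 15 \<longleftrightarrow> A1 * B2 - A2 * B1 = 0"
  proof (cases "A1 * B2 - A2 * B1 = 0")
    case True
    then obtain c where "A2 = c * A1" "B2 = c * B1"
      using proportional_if_det_eq_0 assms(3) by blast
    with True show ?thesis
      using quot_dim_Sp_rels_4_degenerate[OF assms(1-3)] assms(4) by simp
  next
    case False
    then show ?thesis
      using quot_dim_Sp_rels_4_generic[OF assms(1,2)] by simp
  qed
  finally show ?thesis .
qed

end
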